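(* Let $u$ be an endomorphism of a vector space $V$ of countably infinite dimension over a field $\mathbb{F}$, and let $\lambda,a\in\mathbb{F}$. Assume that $V^u=W\oplus H$ is a splitting into submodules and that $F$ is a non-zero free submodule of $W$ such that: (a) $W/F$ is finite-dimensional over $\mathbb{F}$ and, if non-zero, has a stratification satisfying property (PA+); (b) $u(x)=\lambda x$ for all $x\in H$. Then there exists an endomorphism $v$ of $V$ such that $v^2=av$ and $u-v$ is elementary.
   Context: $V^u$ is the $\mathbb{F}[t]$-module with underlying space $V$ and $t\cdot x:=u(x)$; $u$ is elementary if $V^u$ is free. A stratification of a non-zero $\mathbb{F}[t]$-module $M$ is an increasing family $(M_\alpha)_{\alpha\in D}$ of submodules indexed by a well-ordered set $D$ such that each quotient $M_\alpha/\sum_{\beta<\alpha}M_\beta$ is non-zero and monogenous (cyclic), and $M=\sum_{\alpha\in D}M_\alpha$; its dimension sequence is $n_\alpha:=\dim_{\mathbb{F}}(M_\alpha/\sum_{\beta<\alpha}M_\beta)\in\mathbb{N}^*\cup\{+\infty\}$. Property (PA+): $n_\alpha\ge 2$ whenever $\alpha$ is the minimum of $D$ or the successor of some element of $D$. *)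

theory Defs
  imports Main "HOL-Library.Countable_Set" "HOL-Library.Extended_Nat"
begin

text \<open>The \<open>F[t]\<close>-module \<open>V^u\<close> has \<open>t \<cdot> x = u x\<close>; its submodules are exactly the
  \<open>u\<close>-stable linear subspaces.\<close>

definition submod :: "('f::field \<Rightarrow> 'v::ab_group_add \<Rightarrow> 'v) \<Rightarrow> ('v \<Rightarrow> 'v) \<Rightarrow> 'v set \<Rightarrow> bool" where
  "submod scale u M \<longleftrightarrow> module.subspace scale M \<and> u ` M \<subseteq> M"

text \<open>A submodule \<open>M\<close> of \<open>V^u\<close> is free over \<open>F[t]\<close> iff it has an \<open>F[t]\<close>-basis \<open>B\<close>,
  i.e. the family \<open>(u^k b)\<^sub>(b\<in>B, k\<in>\<nat>)\<close> is an \<open>F\<close>-basis of \<open>M\<close> (injectively indexed).\<close>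
definition free_submod :: "('f::field \<Rightarrow> 'v::ab_group_add \<Rightarrow> 'v) \<Rightarrow> ('v \<Rightarrow> 'v) \<Rightarrow> 'v set \<Rightarrow> bool" where
  "free_submod scale u M \<longleftrightarrow> submod scale u M \<and>
     (\<exists>B \<subseteq> M. inj_on (\<lambda>(b, k). (u ^^ k) b) (B \<times> (UNIV :: nat set)) \<and>
        module.independent scale ((\<lambda>(b, k). (u ^^ k) b) ` (B \<times> (UNIV :: nat set))) \<and>
        module.span scale ((\<lambda>(b, k). (u ^^ k) b) ` (B \<times> (UNIV :: nat set))) = M)"

definition elementary :: "('f::field \<Rightarrow> 'v::ab_group_add \<Rightarrow> 'v) \<Rightarrow> ('v \<Rightarrow> 'v) \<Rightarrow> bool" where
  "elementary scale u \<longleftrightarrow> free_submod scale u UNIV"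

text \<open>Dimension over \<open>F\<close> of the quotient \<open>M / L\<close> (for subspaces \<open>L \<subseteq> M\<close>): the least
  size of a subset of \<open>M\<close> whose image spans \<open>M/L\<close>, or \<open>\<infinity>\<close> if there is no finite one.\<close>
definition qdim :: "('f::field \<Rightarrow> 'v::ab_group_add \<Rightarrow> 'v) \<Rightarrow> 'v set \<Rightarrow> 'v set \<Rightarrow> enat" where
  "qdim scale M L =
     (if \<exists>S. S \<subseteq> M \<and> finite S \<and> M \<subseteq> module.span scale (L \<union> S)
      then enat (LEAST n. \<exists>S. S \<subseteq> M \<and> finite S \<and> card S = n \<and> M \<subseteq> module.span scale (L \<union> S))
      else \<infinity>)"

text \<open>The submodule \<open>\<Sum>\<^sub>\<beta>\<^sub><\<^sub>\<alpha> M\<^sub>\<beta>\<close> of \<open>W/F\<close>, lifted to \<open>V\<close>: the span of \<open>F\<close> and all \<open>M\<^sub>\<beta>\<close>, \<open>\<beta> < \<alpha>\<close>.\<close>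
definition below :: "('f::field \<Rightarrow> 'v::ab_group_add \<Rightarrow> 'v) \<Rightarrow> 'v set \<Rightarrow> 'd::wellorder set \<Rightarrow> ('d \<Rightarrow> 'v set) \<Rightarrow> 'd \<Rightarrow> 'v set" where
  "below scale Fm D M \<alpha> = module.span scale (Fm \<union> (\<Union>\<beta>\<in>{\<beta>\<in>D. \<beta> < \<alpha>}. M \<beta>))"

text \<open>Submodules of \<open>W/F\<close> are represented by the
  submodules \<open>M\<close> of \<open>V^u\<close> with \<open>F \<subseteq> M \<subseteq> W\<close>.\<close>
definition stratification_quot ::
  "('f::field \<Rightarrow> 'v::ab_group_add \<Rightarrow> 'v) \<Rightarrow> ('v \<Rightarrow> 'v) \<Rightarrow> 'v set \<Rightarrow> 'v set \<Rightarrow> 'd::wellorder set \<Rightarrow> ('d \<Rightarrow> 'v set) \<Rightarrow> bool" where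
  "stratification_quot scale u W Fm D M \<longleftrightarrow>
     (\<forall>\<alpha>\<in>D. submod scale u (M \<alpha>) \<and> Fm \<subseteq> M \<alpha> \<and> M \<alpha> \<subseteq> W) \<and>
     (\<forall>\<alpha>\<in>D. \<forall>\<beta>\<in>D. \<alpha> \<le> \<beta> \<longrightarrow> M \<alpha> \<subseteq> M \<beta>) \<and>
     (\<forall>\<alpha>\<in>D. \<not> M \<alpha> \<subseteq> below scale Fm D M \<alpha>) \<and>
     (\<forall>\<alpha>\<in>D. \<exists>x\<in>M \<alpha>. M \<alpha> \<subseteq> module.span scale (below scale Fm D M \<alpha> \<union> range (\<lambda>k. (u ^^ k) x))) \<and>
     W = module.span scale (Fm \<union> (\<Union>\<alpha>\<in>D. M \<alpha>))"

definition PA_plus ::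
  "('f::field \<Rightarrow> 'v::ab_group_add \<Rightarrow> 'v) \<Rightarrow> 'v set \<Rightarrow> 'd::wellorder set \<Rightarrow> ('d \<Rightarrow> 'v set) \<Rightarrow> bool" where
  "PA_plus scale Fm D M \<longleftrightarrow>
     (\<forall>\<alpha>\<in>D. ((\<forall>\<beta>\<in>D. \<alpha> \<le> \<beta>) \<or>
              (\<exists>\<beta>\<in>D. \<beta> < \<alpha> \<and> \<not> (\<exists>\<gamma>\<in>D. \<beta> < \<gamma> \<and> \<gamma> < \<alpha>)))
            \<longrightarrow> qdim scale (M \<alpha>) (below scale Fm D M \<alpha>) \<ge> 2)"

end

theory Submission
  imports Defs
begin

context vector_space
begin

lemma span_Un_span: "span (span A \<union> B) = span (A \<union> B)"
proof -
  have "span A \<union> B \<subseteq> span (A \<union> B)"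
    using span_mono[of A "A \<union> B"] span_superset[of "A \<union> B"] by blast
  moreover have "A \<union> B \<subseteq> span (span A \<union> B)"
    using span_superset[of A] span_superset[of "span A \<union> B"] by blast
  ultimately show ?thesis
    unfolding span_eq by blast
qed

lemma linear_image_in_span:
  assumes "Vector_Spaces.linear scale scale f" "f ` A \<subseteq> span B" "x \<in> span A"
  shows "f x \<in> span B"
proof -
  interpret f: Vector_Spaces.linear scale scale f by fact
  have "f x \<in> span (f ` A)"
    using assms(3) f.span_image by blast
  also have "\<dots> \<subseteq> span B"
    using assms(2) by (simp add: span_minimal)
  finally show ?thesis .
qed

lemma independent_Un:
  assumes "independent A" "independent B" "span A \<inter> span B = {0}"
  shows "independent (A \<union> B)"
  unfolding independent_explicit_finite_subsets
proof (intro allI impI)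
  fix S and c :: "'b \<Rightarrow> 'a"
  assume S: "S \<subseteq> A \<union> B" "finite S" "(\<Sum>v\<in>S. c v *s v) = 0"
  define x where "x = (\<Sum>v\<in>S \<inter> A. c v *s v)"
  have "S = (S \<inter> A) \<union> (S - A)" by blast
  then have split: "(\<Sum>v\<in>S. c v *s v) = x + (\<Sum>v\<in>S - A. c v *s v)"
    unfolding x_def using S(2) by (metis Int_Diff_disjoint finite_Diff finite_Int sum.union_disjoint)
  have "x \<in> span A"
    unfolding x_def by (rule span_sum) (auto intro: span_scale span_base)
  moreover have "x \<in> span B"
  proof -
    have "(\<Sum>v\<in>S - A. c v *s v) \<in> span B"
      using S(1) by (intro span_sum) (auto intro: span_scale span_base)
    moreover have "x = - (\<Sum>v\<in>S - A. c v *s v)"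
      using S(3) split by (simp add: eq_neg_iff_add_eq_0)
    ultimately show ?thesis
      by (simp add: span_neg)
  qed
  ultimately have "x = 0" using assms(3) by blast
  then have "(\<Sum>v\<in>S - A. c v *s v) = 0"
    using S(3) split by simp
  moreover have "S - A \<subseteq> B" using S(1) by blast
  ultimately have "\<forall>v\<in>S - A. c v = 0"
    using assms(2) S(2) unfolding independent_explicit_finite_subsets by blast
  moreover have "\<forall>v\<in>S \<inter> A. c v = 0"
    using assms(1) S(2) \<open>x = 0\<close> unfolding x_def independent_explicit_finite_subsets by blast
  ultimately show "\<forall>v\<in>S. c v = 0"
    by blast
qed

lemma independent_Un_triangular:
  fixes r :: "nat \<Rightarrow> 'b"
  assumes "independent A" "\<And>k. k < n \<Longrightarrow> r k \<notin> span (A \<union> r ` {..<k})"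
  shows "independent (A \<union> r ` {..<n}) \<and> inj_on r {..<n} \<and> A \<inter> r ` {..<n} = {}"
  using assms(2)
proof (induction n)
  case 0
  then show ?case using assms(1) by simp
next
  case (Suc n)
  have IH: "independent (A \<union> r ` {..<n})" "inj_on r {..<n}" "A \<inter> r ` {..<n} = {}"
    using Suc.IH Suc.prems by (meson less_SucI)+
  have new: "r n \<notin> span (A \<union> r ` {..<n})"
    by (rule Suc.prems[OF lessI])
  have fresh: "r n \<notin> A \<union> r ` {..<n}"
    using new span_base[of "r n" "A \<union> r ` {..<n}"] by blast
  have "A \<union> r ` {..<Suc n} = insert (r n) (A \<union> r ` {..<n})"
    by (auto simp: lessThan_Suc)
  then have "independent (A \<union> r ` {..<Suc n})"
    using independent_insertI[OF new IH(1)] by simp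
  moreover have "inj_on r {..<Suc n}"
    using IH(2) fresh by (simp add: lessThan_Suc)
  moreover have "A \<inter> r ` {..<Suc n} = {}"
    using IH(3) fresh by (auto simp: lessThan_Suc)
  ultimately show ?case
    by blast
qed

lemma card_le_if_triangular:
  fixes t :: "nat \<Rightarrow> 'b"
  assumes "finite S" "\<And>k. k < n \<Longrightarrow> t k \<notin> span (L \<union> t ` {..<k})"
    and "t ` {..<n} \<subseteq> span (L \<union> S)"
  shows "n \<le> card S"
proof -
  have "\<exists>r. r \<in> span S \<and> t k - r \<in> span L" if "k < n" for k
  proof -
    have "t k \<in> span (L \<union> S)"
      using assms(3) that by blast
    then obtain x r where "t k = x + r" "x \<in> span L" "r \<in> span S"
      unfolding span_Un by blast
    then show ?thesis by (intro exI[of _ r]) auto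
  qed
  then obtain r where r: "\<And>k. k < n \<Longrightarrow> r k \<in> span S \<and> t k - r k \<in> span L"
    by metis
  have "r k \<notin> span ({} \<union> r ` {..<k})" if k: "k < n" for k
  proof
    let ?T = "span (L \<union> t ` {..<k})"
    have low: "t j - r j \<in> ?T" if "j < n" for j
      using r[OF that] span_mono[of L "L \<union> t ` {..<k}"] by blast
    have "r j \<in> ?T" if "j < k" for j
    proof -
      have "t j \<in> ?T" using that by (intro span_base) blast
      from span_diff[OF this low[of j]] show ?thesis using that k by simp
    qed
    then have "span ({} \<union> r ` {..<k}) \<subseteq> ?T"
      by (intro span_minimal) auto
    moreover assume "r k \<in> span ({} \<union> r ` {..<k})"
    ultimately have "t k - r k + r k \<in> ?T"
      using low[OF k] span_add by blast
    then show False
      using assms(2)[OF k] by simp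
  qed
  then have "independent ({} \<union> r ` {..<n}) \<and> inj_on r {..<n} \<and> {} \<inter> r ` {..<n} = {}"
    by (intro independent_Un_triangular independent_empty) auto
  then have ind: "independent (r ` {..<n})" and inj: "inj_on r {..<n}"
    by simp_all
  moreover have "r ` {..<n} \<subseteq> span S"
    using r by blast
  ultimately have "card (r ` {..<n}) \<le> card S"
    using independent_span_bound[OF assms(1)] by simp
  moreover have "card (r ` {..<n}) = n"
    using inj card_image by fastforce
  ultimately show ?thesis
    by simp
qed

lemma in_span_finite_subset:
  assumes "x \<in> span B"
  obtains S where "finite S" "S \<subseteq> B" "x \<in> span S"
proof -
  have "\<exists>S r. x = (\<Sum>a\<in>S. r a *s a) \<and> finite S \<and> S \<subseteq> B"
    using assms unfolding span_explicit by simp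
  then obtain S r where S: "finite S" "S \<subseteq> B" "x = (\<Sum>a\<in>S. r a *s a)"
    by blast
  have "(\<Sum>a\<in>S. r a *s a) \<in> span S"
    by (rule span_sum) (auto intro: span_scale span_base)
  then show ?thesis
    using that S by blast
qed

lemma countable_independent:
  assumes "countable B" "span B = UNIV" "independent X"
  shows "countable X"
proof -
  let ?C = "{S. finite S \<and> S \<subseteq> B}"
  have "X \<subseteq> (\<Union>S\<in>?C. X \<inter> span S)"
  proof
    fix x assume "x \<in> X"
    moreover obtain S where "finite S" "S \<subseteq> B" "x \<in> span S"
      using in_span_finite_subset[of x B] assms(2) by blast
    ultimately show "x \<in> (\<Union>S\<in>?C. X \<inter> span S)" by blast
  qed
  moreover have "countable (\<Union>S\<in>?C. X \<inter> span S)"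
  proof (rule countable_UN[OF countable_Collect_finite_subset[OF assms(1)]])
    fix S assume "S \<in> ?C"
    then have "finite S"
      by simp
    moreover have "independent (X \<inter> span S)"
      using assms(3) by (rule independent_mono) blast
    ultimately have "finite (X \<inter> span S)"
      using independent_span_bound[of S "X \<inter> span S"] by simp
    then show "countable (X \<inter> span S)"
      by (rule countable_finite)
  qed
  ultimately show ?thesis
    by (rule countable_subset)
qed

lemma independent_if_span_eq:
  assumes "finite D" "inj_on e D" "independent (e ` D)" "span (f ` D) = span (e ` D)"
  shows "independent (f ` D) \<and> inj_on f D"
proof -
  obtain B where B: "B \<subseteq> f ` D" "independent B" "f ` D \<subseteq> span B" "card B = dim (f ` D)"
    using basis_exists by blast
  have "dim (f ` D) = card D"
    using assms(2-4) dim_span[of "f ` D"] dim_span_eq_card_independent[OF assms(3)] card_image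
    by metis
  moreover have "card (f ` D) \<le> card D"
    using assms(1) by (rule card_image_le)
  ultimately have "B = f ` D" and card: "card (f ` D) = card D"
    using B(1,4) card_mono[OF finite_imageI[OF assms(1)] B(1)] card_subset_eq[OF finite_imageI[OF assms(1)] B(1)]
    by linarith+
  then show ?thesis
    using B(2) eq_card_imp_inj_on[OF assms(1) card] by blast
qed

lemma independent_if_finite_subsets:
  assumes "\<And>S. S \<subseteq> A \<Longrightarrow> finite S \<Longrightarrow> independent S"
  shows "independent A"
  unfolding independent_explicit_finite_subsets
proof (intro allI impI)
  fix S and c :: "'b \<Rightarrow> 'a"
  assume S: "S \<subseteq> A" "finite S" and sum: "(\<Sum>v\<in>S. c v *s v) = 0"
  then have "independent S"
    using assms by blast
  then show "\<forall>v\<in>S. c v = 0"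
    using S sum unfolding independent_explicit_finite_subsets by blast
qed

lemma span_UN_cong:
  assumes "\<And>i. i \<in> I \<Longrightarrow> span (A i) = span (B i)"
  shows "span (\<Union>i\<in>I. A i) = span (\<Union>i\<in>I. B i)"
proof -
  have "A i \<subseteq> span (\<Union>i\<in>I. B i)" "B i \<subseteq> span (\<Union>i\<in>I. A i)" if "i \<in> I" for i
    using that assms[OF that] span_superset[of "A i"] span_superset[of "B i"]
      span_mono[of "A i" "\<Union>i\<in>I. A i"] span_mono[of "B i" "\<Union>i\<in>I. B i"] by blast+
  then show ?thesis
    unfolding span_eq by blast
qed

lemma span_image_if_triangular:
  assumes lin: "Vector_Spaces.linear scale scale s"
    and tri: "\<And>k. s (e k) - e (Suc k) \<in> span (e ` {..k})"
  shows "s ` span (e ` {..n}) \<subseteq> span (e ` {..Suc n})"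
proof -
  have "s ` e ` {..n} \<subseteq> span (e ` {..Suc n})"
  proof
    fix x assume "x \<in> s ` e ` {..n}"
    then obtain k where k: "k \<le> n" "x = s (e k)"
      by blast
    have "span (e ` {..k}) \<subseteq> span (e ` {..Suc n})"
      using k(1) by (intro span_mono image_mono) auto
    then have "s (e k) - e (Suc k) \<in> span (e ` {..Suc n})"
      using tri[of k] by blast
    moreover have "e (Suc k) \<in> span (e ` {..Suc n})"
      using k(1) by (intro span_base) auto
    ultimately have "s (e k) - e (Suc k) + e (Suc k) \<in> span (e ` {..Suc n})"
      by (rule span_add)
    then show "x \<in> span (e ` {..Suc n})"
      using k(2) by simp
  qed
  then show ?thesis
    using linear_image_in_span[OF lin] by blast
qed

lemma span_orbit_eq_if_triangular:
  assumes lin: "Vector_Spaces.linear scale scale s"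
    and tri: "\<And>k. s (e k) - e (Suc k) \<in> span (e ` {..k})"
  shows "span ((\<lambda>k. (s ^^ k) (e 0)) ` {..n}) = span (e ` {..n})"
proof (induction n)
  case 0
  show ?case by simp
next
  case (Suc n)
  let ?f = "\<lambda>k. (s ^^ k) (e 0)"
  have mono_f: "span (?f ` {..n}) \<subseteq> span (?f ` {..Suc n})"
    and mono_e: "span (e ` {..n}) \<subseteq> span (e ` {..Suc n})"
    by (intro span_mono image_mono; auto)+
  have "?f n \<in> span (e ` {..n})"
    using Suc.IH span_base[of "?f n" "?f ` {..n}"] by auto
  then have f_in: "?f (Suc n) \<in> span (e ` {..Suc n})"
    using span_image_if_triangular[OF lin tri, of n] by auto
  have "s ` ?f ` {..n} \<subseteq> span (?f ` {..Suc n})"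
  proof
    fix x assume "x \<in> s ` ?f ` {..n}"
    then obtain k where "k \<le> n" "x = ?f (Suc k)"
      by auto
    then show "x \<in> span (?f ` {..Suc n})"
      by (intro span_base rev_image_eqI[of "Suc k"]) auto
  qed
  moreover have "e n \<in> span (?f ` {..n})"
    using Suc.IH span_base[of "e n" "e ` {..n}"] by auto
  ultimately have "s (e n) \<in> span (?f ` {..Suc n})"
    using linear_image_in_span[OF lin] by blast
  moreover have "s (e n) - e (Suc n) \<in> span (?f ` {..Suc n})"
    using tri[of n] Suc.IH mono_f by blast
  ultimately have e_in: "e (Suc n) \<in> span (?f ` {..Suc n})"
    using span_diff by fastforce
  have "?f ` {..n} \<subseteq> span (e ` {..Suc n})"
    using Suc.IH span_superset[of "?f ` {..n}"] mono_e by auto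
  moreover have "e ` {..n} \<subseteq> span (?f ` {..Suc n})"
    using Suc.IH span_superset[of "e ` {..n}"] mono_f by auto
  ultimately show ?case
    using f_in e_in unfolding span_eq atMost_Suc image_insert by blast
qed

lemma independent_inj_on_if_finite_subsets:
  assumes "\<And>T. finite T \<Longrightarrow> T \<subseteq> D \<Longrightarrow>
    \<exists>T'. T \<subseteq> T' \<and> T' \<subseteq> D \<and> independent (f ` T') \<and> inj_on f T'"
  shows "independent (f ` D) \<and> inj_on f D"
proof
  show "independent (f ` D)"
  proof (rule independent_if_finite_subsets)
    fix S assume "S \<subseteq> f ` D" "finite S"
    then obtain T where T: "T \<subseteq> D" "finite T" "S = f ` T"
      by (metis finite_subset_image)
    then obtain T' where "T \<subseteq> T'" "independent (f ` T')"
      using assms by blast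
    then show "independent S"
      using T(3) independent_mono[of "f ` T'" "f ` T"] by blast
  qed
  show "inj_on f D"
  proof (rule inj_onI)
    fix x y assume "x \<in> D" "y \<in> D" "f x = f y"
    moreover obtain T' where "{x, y} \<subseteq> T'" "inj_on f T'"
      using assms[of "{x, y}"] \<open>x \<in> D\<close> \<open>y \<in> D\<close> by auto
    ultimately show "x = y"
      by (auto dest: inj_onD)
  qed
qed

lemma elementary_if_orbits_basis:
  fixes x :: "'g \<Rightarrow> 'b"
  assumes inj: "inj_on (\<lambda>(g, k). (s ^^ k) (x g)) (G \<times> UNIV)"
    and ind: "independent ((\<lambda>(g, k). (s ^^ k) (x g)) ` (G \<times> UNIV))"
    and spans: "span ((\<lambda>(g, k). (s ^^ k) (x g)) ` (G \<times> UNIV)) = UNIV"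
  shows "elementary scale s"
proof -
  have orbits: "(\<lambda>(b, k). (s ^^ k) b) ` (x ` G \<times> UNIV) = (\<lambda>(g, k). (s ^^ k) (x g)) ` (G \<times> UNIV)"
    by force
  have "inj_on (\<lambda>(b, k). (s ^^ k) b) (x ` G \<times> UNIV)"
  proof (rule inj_onI, clarsimp)
    fix g k g' k' assume "g \<in> G" "g' \<in> G" "(s ^^ k) (x g) = (s ^^ k') (x g')"
    then show "x g = x g' \<and> k = k'"
      using inj unfolding inj_on_def by auto
  qed
  then show ?thesis
    unfolding elementary_def free_submod_def submod_def
    using ind spans orbits by (intro conjI exI[of _ "x ` G"]) (auto simp: subspace_UNIV)
qed

lemma elementary_if_triangular_basis:
  fixes e :: "'g \<Rightarrow> nat \<Rightarrow> 'b"
  assumes lin: "Vector_Spaces.linear scale scale s"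
    and inj: "inj_on (\<lambda>(g, n). e g n) (G \<times> UNIV)"
    and ind: "independent ((\<lambda>(g, n). e g n) ` (G \<times> UNIV))"
    and spans: "span ((\<lambda>(g, n). e g n) ` (G \<times> UNIV)) = UNIV"
    and tri: "\<And>g n. g \<in> G \<Longrightarrow> s (e g n) - e g (Suc n) \<in> span (e g ` {..n})"
  shows "elementary scale s"
proof -
  define f where "f = (\<lambda>(g, k). (s ^^ k) (e g 0))"
  let ?e = "\<lambda>(g, n). e g n"
  have orbit: "span ((\<lambda>k. f (g, k)) ` {..n}) = span (e g ` {..n})" if "g \<in> G" for g n
    unfolding f_def using span_orbit_eq_if_triangular[OF lin tri[OF that]] by simp
  have block: "independent (f ` (G0 \<times> {..n})) \<and> inj_on f (G0 \<times> {..n})"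
    if G0: "finite G0" "G0 \<subseteq> G" for G0 n
  proof (rule independent_if_span_eq)
    show "finite (G0 \<times> {..n})"
      using G0(1) by simp
    show "inj_on ?e (G0 \<times> {..n})"
      using G0(2) by (intro inj_on_subset[OF inj]) auto
    show "independent (?e ` (G0 \<times> {..n}))"
      using G0(2) by (intro independent_mono[OF ind] image_mono) auto
    have "f ` (G0 \<times> {..n}) = (\<Union>g\<in>G0. (\<lambda>k. f (g, k)) ` {..n})"
      and "?e ` (G0 \<times> {..n}) = (\<Union>g\<in>G0. e g ` {..n})"
      by auto
    then show "span (f ` (G0 \<times> {..n})) = span (?e ` (G0 \<times> {..n}))"
      using orbit G0(2) span_UN_cong[of G0 "\<lambda>g. (\<lambda>k. f (g, k)) ` {..n}" "\<lambda>g. e g ` {..n}"]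
      by (simp add: subset_eq)
  qed
  have f_basis: "independent (f ` (G \<times> UNIV)) \<and> inj_on f (G \<times> UNIV)"
  proof (rule independent_inj_on_if_finite_subsets)
    fix T :: "('g \<times> nat) set"
    assume T: "finite T" "T \<subseteq> G \<times> UNIV"
    have "T \<subseteq> fst ` T \<times> {..Max (snd ` T)}"
      using T(1) by (force intro: Max_ge)
    moreover have "finite (fst ` T)" "fst ` T \<subseteq> G"
      using T by auto
    ultimately show "\<exists>T'. T \<subseteq> T' \<and> T' \<subseteq> G \<times> UNIV \<and> independent (f ` T') \<and> inj_on f T'"
      using block[of "fst ` T" "Max (snd ` T)"] by blast
  qed
  have "?e ` (G \<times> UNIV) \<subseteq> span (f ` (G \<times> UNIV))"
  proof clarify
    fix g n assume "g \<in> G"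
    have "span ((\<lambda>k. f (g, k)) ` {..n}) \<subseteq> span (f ` (G \<times> UNIV))"
      using \<open>g \<in> G\<close> by (intro span_mono) auto
    then show "e g n \<in> span (f ` (G \<times> UNIV))"
      using orbit[OF \<open>g \<in> G\<close>, of n] span_base[of "e g n" "e g ` {..n}"] by auto
  qed
  then have "span (f ` (G \<times> UNIV)) = UNIV"
    using spans span_minimal[of "?e ` (G \<times> UNIV)" "span (f ` (G \<times> UNIV))"] by auto
  then show ?thesis
    using elementary_if_orbits_basis[of s "\<lambda>g. e g 0" G] f_basis unfolding f_def by simp
qed

lemma enumerate_atMost:
  fixes S :: "nat set"
  assumes "infinite S"
  shows "enumerate S ` {..k} = {m \<in> S. m \<le> enumerate S k}"
proof
  show "enumerate S ` {..k} \<subseteq> {m \<in> S. m \<le> enumerate S k}"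
    using assms by (auto simp: enumerate_in_set)
  show "{m \<in> S. m \<le> enumerate S k} \<subseteq> enumerate S ` {..k}"
  proof clarify
    fix m assume "m \<in> S" "m \<le> enumerate S k"
    moreover obtain j where "enumerate S j = m"
      using enumerate_Ex[OF assms \<open>m \<in> S\<close>] by blast
    ultimately show "m \<in> enumerate S ` {..k}"
      using assms by auto
  qed
qed

lemma bij_betw_enumerate_Sigma:
  fixes I :: "'g \<Rightarrow> nat set"
  assumes inf: "\<And>g. g \<in> G \<Longrightarrow> infinite (I g)"
  shows "bij_betw (\<lambda>(g, k). (g, enumerate (I g) k)) (G \<times> UNIV) (SIGMA g:G. I g)"
proof (rule bij_betw_imageI)
  show "inj_on (\<lambda>(g, k). (g, enumerate (I g) k)) (G \<times> UNIV)"
  proof (rule inj_onI, clarsimp)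
    fix g k k' assume "g \<in> G" "enumerate (I g) k = enumerate (I g) k'"
    then show "k = k'"
      using inj_enumerate[OF inf] by (blast dest: injD)
  qed
  show "(\<lambda>(g, k). (g, enumerate (I g) k)) ` (G \<times> UNIV) = (SIGMA g:G. I g)"
  proof
    show "(\<lambda>(g, k). (g, enumerate (I g) k)) ` (G \<times> UNIV) \<subseteq> (SIGMA g:G. I g)"
      using inf by (auto simp: enumerate_in_set)
    show "(SIGMA g:G. I g) \<subseteq> (\<lambda>(g, k). (g, enumerate (I g) k)) ` (G \<times> UNIV)"
    proof clarify
      fix g n assume "g \<in> G" "n \<in> I g"
      then obtain k where "enumerate (I g) k = n"
        using enumerate_Ex inf by blast
      then show "(g, n) \<in> (\<lambda>(g, k). (g, enumerate (I g) k)) ` (G \<times> UNIV)"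
        using \<open>g \<in> G\<close> by (intro image_eqI[of _ _ "(g, k)"]) simp_all
    qed
  qed
qed

lemma elementary_if_triangular_basis_sparse:
  fixes e :: "'g \<Rightarrow> nat \<Rightarrow> 'b" and I :: "'g \<Rightarrow> nat set"
  assumes lin: "Vector_Spaces.linear scale scale s"
    and inf: "\<And>g. g \<in> G \<Longrightarrow> infinite (I g)"
    and inj: "inj_on (\<lambda>(g, n). e g n) (SIGMA g:G. I g)"
    and ind: "independent ((\<lambda>(g, n). e g n) ` (SIGMA g:G. I g))"
    and spans: "span ((\<lambda>(g, n). e g n) ` (SIGMA g:G. I g)) = UNIV"
    and tri: "\<And>g n. g \<in> G \<Longrightarrow> n \<in> I g \<Longrightarrow>
      s (e g n) - e g (LEAST m. m \<in> I g \<and> n < m) \<in> span (e g ` {m \<in> I g. m \<le> n})"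
  shows "elementary scale s"
proof -
  define \<phi> where "\<phi> = (\<lambda>(g, k). (g, enumerate (I g) k))"
  have bij: "bij_betw \<phi> (G \<times> UNIV) (SIGMA g:G. I g)"
    unfolding \<phi>_def using inf by (rule bij_betw_enumerate_Sigma)
  have comp: "(\<lambda>(g, k). e g (enumerate (I g) k)) = (\<lambda>(g, n). e g n) \<circ> \<phi>"
    by (auto simp: \<phi>_def)
  have reindex: "(\<lambda>(g, n). e g n) ` (SIGMA g:G. I g) = (\<lambda>(g, k). e g (enumerate (I g) k)) ` (G \<times> UNIV)"
    unfolding comp image_comp[symmetric] bij_betw_imp_surj_on[OF bij] ..
  show ?thesis
  proof (rule elementary_if_triangular_basis[OF lin])
    show "inj_on (\<lambda>(g, k). e g (enumerate (I g) k)) (G \<times> UNIV)"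
      unfolding comp using inj bij_betw_imp_surj_on[OF bij]
      by (intro comp_inj_on[OF bij_betw_imp_inj_on[OF bij]]) simp
    show "independent ((\<lambda>(g, k). e g (enumerate (I g) k)) ` (G \<times> UNIV))"
      using ind unfolding reindex .
    show "span ((\<lambda>(g, k). e g (enumerate (I g) k)) ` (G \<times> UNIV)) = UNIV"
      using spans unfolding reindex .
    fix g k assume "g \<in> G"
    have "(\<lambda>k. e g (enumerate (I g) k)) ` {..k} = e g ` enumerate (I g) ` {..k}"
      by (simp add: image_image)
    then show "s (e g (enumerate (I g) k)) - e g (enumerate (I g) (Suc k))
        \<in> span ((\<lambda>k. e g (enumerate (I g) k)) ` {..k})"
      using tri[OF \<open>g \<in> G\<close> enumerate_in_set[OF inf[OF \<open>g \<in> G\<close>]]] inf[OF \<open>g \<in> G\<close>]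
      by (simp add: enumerate_Suc'' enumerate_atMost)
  qed
qed

end

lemma min_or_successor_if_finite_below:
  fixes D :: "'d::wellorder set"
  assumes "finite {\<beta>\<in>D. \<beta> < b}"
  shows "(\<forall>\<beta>\<in>D. b \<le> \<beta>) \<or> (\<exists>\<beta>\<in>D. \<beta> < b \<and> \<not> (\<exists>\<gamma>\<in>D. \<beta> < \<gamma> \<and> \<gamma> < b))"
proof (cases "{\<beta>\<in>D. \<beta> < b} = {}")
  case True
  then show ?thesis
    by (auto simp: not_less)
next
  case False
  define m where "m = Max {\<beta>\<in>D. \<beta> < b}"
  have "m \<in> D" "m < b"
    using Max_in[OF assms False] unfolding m_def by auto
  moreover have "\<gamma> \<le> m" if "\<gamma> \<in> D" "\<gamma> < b" for \<gamma>
    using Max_ge[OF assms] that unfolding m_def by blast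
  ultimately show ?thesis
    by (meson leD)
qed

lemma finite_if_initial_segments_bounded:
  fixes D :: "'d::wellorder set"
  assumes bound: "\<And>A. finite A \<Longrightarrow> A \<subseteq> D \<Longrightarrow> (\<forall>\<alpha>\<in>A. \<forall>\<beta>\<in>D. \<beta> < \<alpha> \<longrightarrow> \<beta> \<in> A) \<Longrightarrow> card A \<le> k"
  shows "finite D"
proof -
  have no_large: False
    if X: "finite X" "card X = Suc k" "X \<subseteq> D" and below: "\<And>\<gamma>. \<gamma> \<in> X \<Longrightarrow> finite {\<beta>\<in>D. \<beta> < \<gamma>}"
    for X
  proof -
    have "X \<noteq> {}"
      using X(2) by auto
    define A where "A = {\<beta>\<in>D. \<beta> \<le> Max X}"
    have "Max X \<in> X"
      using X(1) \<open>X \<noteq> {}\<close> by (rule Max_in)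
    then have "A = insert (Max X) {\<beta>\<in>D. \<beta> < Max X}"
      using X(3) unfolding A_def by auto
    then have "finite A"
      using below[OF \<open>Max X \<in> X\<close>] by simp
    moreover have "X \<subseteq> A"
      using X(1,3) unfolding A_def by auto
    ultimately have "card X \<le> card A"
      by (rule card_mono)
    also have "card A \<le> k"
      using \<open>finite A\<close> unfolding A_def by (intro bound) auto
    finally show False
      using X(2) by simp
  qed
  have below: "finite {\<beta>\<in>D. \<beta> < \<alpha>}" for \<alpha>
  proof (induction \<alpha> rule: less_induct)
    case (less \<alpha>)
    show ?case
    proof (rule ccontr)
      assume "infinite {\<beta>\<in>D. \<beta> < \<alpha>}"
      then obtain X where "finite X" "card X = Suc k" "X \<subseteq> {\<beta>\<in>D. \<beta> < \<alpha>}"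
        using infinite_arbitrarily_large by blast
      then show False
        using no_large[of X] less.IH by blast
    qed
  qed
  show "finite D"
  proof (rule ccontr)
    assume "infinite D"
    then obtain X where "finite X" "card X = Suc k" "X \<subseteq> D"
      using infinite_arbitrarily_large by blast
    then show False
      using no_large below by blast
  qed
qed

text \<open>\<open>chain_basis_mod u Fm N y L T\<close>: the vectors \<open>y 0, \<dots>, y (N - 1)\<close> form a basis of \<open>T\<close>
  modulo \<open>Fm\<close> made of consecutive \<open>u\<close>-chains; \<open>L\<close> is the set of positions where a chain ends
  (there \<open>u\<close> falls back into the span of \<open>Fm\<close> and the chains so far), and every chain that
  follows another one has length at least two.\<close>
definition (in vector_space) chain_basis_mod ::
    "('b \<Rightarrow> 'b) \<Rightarrow> 'b set \<Rightarrow> nat \<Rightarrow> (nat \<Rightarrow> 'b) \<Rightarrow> nat set \<Rightarrow> 'b set \<Rightarrow> bool"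
  where "chain_basis_mod u Fm N y L T \<longleftrightarrow>
    (\<forall>m<N. y m \<notin> span (Fm \<union> y ` {..<m})) \<and> span (Fm \<union> y ` {..<N}) = T \<and>
    (\<forall>m<N. m \<notin> L \<longrightarrow> Suc m < N \<and> u (y m) = y (Suc m)) \<and>
    (\<forall>m\<in>L. m < N \<and> u (y m) \<in> span (Fm \<union> y ` {..m}) \<and> Suc m \<notin> L)"

context vector_space
begin

lemma chain_basis_mod_card_le:
  assumes "chain_basis_mod u Fm N y L T" "T \<subseteq> span (Fm \<union> S0)" "finite S0"
  shows "N \<le> card S0"
proof (rule card_le_if_triangular[OF assms(3)])
  show "y k \<notin> span (Fm \<union> y ` {..<k})" if "k < N" for k
    using assms(1) that unfolding chain_basis_mod_def by blast
  have "y ` {..<N} \<subseteq> span (Fm \<union> y ` {..<N})"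
    using span_superset[of "Fm \<union> y ` {..<N}"] by blast
  then show "y ` {..<N} \<subseteq> span (Fm \<union> S0)"
    using assms(1,2) unfolding chain_basis_mod_def by blast
qed

lemma span_append_lessThan:
  fixes y t :: "nat \<Rightarrow> 'b"
  assumes "span (Fm \<union> y ` {..<N}) = Lb"
  shows "span (Fm \<union> (\<lambda>m. if m < N then y m else t (m - N)) ` {..<N + k}) = span (Lb \<union> t ` {..<k})"
proof -
  have "plus N ` {..<k} = {N..<N + k}"
    by (simp add: lessThan_atLeast0 add.commute)
  then have "{..<N + k} = {..<N} \<union> plus N ` {..<k}"
    by auto
  moreover have "(\<lambda>m. if m < N then y m else t (m - N)) ` plus N ` {..<k} = t ` {..<k}"
    unfolding image_image by simp
  moreover have "(\<lambda>m. if m < N then y m else t (m - N)) ` {..<N} = y ` {..<N}"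
    by (intro image_cong) auto
  ultimately have "(\<lambda>m. if m < N then y m else t (m - N)) ` {..<N + k} = y ` {..<N} \<union> t ` {..<k}"
    by (simp only: image_Un)
  then show ?thesis
    using span_Un_span[of "Fm \<union> y ` {..<N}" "t ` {..<k}"] assms by (simp add: Un_assoc)
qed

lemma triangular_append:
  fixes y t :: "nat \<Rightarrow> 'b"
  assumes y: "\<forall>m<N. y m \<notin> span (Fm \<union> y ` {..<m})" "span (Fm \<union> y ` {..<N}) = Lb"
    and t: "\<And>k. k < n \<Longrightarrow> t k \<notin> span (Lb \<union> t ` {..<k})"
    and m: "m < N + n"
  shows "(\<lambda>m. if m < N then y m else t (m - N)) m
    \<notin> span (Fm \<union> (\<lambda>m. if m < N then y m else t (m - N)) ` {..<m})"
proof (cases "m < N")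
  case True
  moreover have "(\<lambda>m. if m < N then y m else t (m - N)) ` {..<m} = y ` {..<m}"
    using True by (intro image_cong) auto
  ultimately show ?thesis
    using y(1) by simp
next
  case False
  define k where "k = m - N"
  have "m = N + k" "k < n"
    using False m by (simp_all add: k_def)
  then show ?thesis
    using t[of k] span_append_lessThan[OF y(2), of t k] by simp
qed

lemma chain_basis_mod_append:
  fixes t :: "nat \<Rightarrow> 'b"
  assumes basis: "chain_basis_mod u Fm N y L Lb"
    and n: "2 \<le> n" and t: "\<And>k. u (t k) = t (Suc k)"
    and new: "\<And>k. k < n \<Longrightarrow> t k \<notin> span (Lb \<union> t ` {..<k})"
    and last: "t n \<in> span (Lb \<union> t ` {..<n})"
  shows "chain_basis_mod u Fm (N + n) (\<lambda>m. if m < N then y m else t (m - N))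
    (insert (N + n - 1) L) (span (Lb \<union> t ` {..<n}))"
proof -
  define y' where "y' m = (if m < N then y m else t (m - N))" for m
  have y: "\<forall>m<N. y m \<notin> span (Fm \<union> y ` {..<m})" "span (Fm \<union> y ` {..<N}) = Lb"
    "\<forall>m<N. m \<notin> L \<longrightarrow> Suc m < N \<and> u (y m) = y (Suc m)"
    "\<forall>m\<in>L. m < N \<and> u (y m) \<in> span (Fm \<union> y ` {..m}) \<and> Suc m \<notin> L"
    using basis unfolding chain_basis_mod_def by blast+
  have inner: "Suc m < N + n \<and> u (y' m) = y' (Suc m)" if "m < N + n" "m \<notin> insert (N + n - 1) L" for m
  proof (cases "m < N")
    case True
    then have "Suc m < N \<and> u (y m) = y (Suc m)"
      using y(3) that by blast
    then show ?thesis
      using True by (simp add: y'_def)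
  next
    case False
    then show ?thesis using that t by (auto simp: y'_def Suc_diff_le)
  qed
  have ends: "m < N + n \<and> u (y' m) \<in> span (Fm \<union> y' ` {..m}) \<and> Suc m \<notin> insert (N + n - 1) L"
    if "m \<in> insert (N + n - 1) L" for m
  proof (cases "m = N + n - 1")
    case True
    then have "{..m} = {..<N + n}" "y' m = t (n - 1)" "Suc (n - 1) = n"
      using n by (auto simp: y'_def)
    then show ?thesis
      using True n y(4) last span_append_lessThan[OF y(2), of t n] t[of "n - 1"]
      unfolding y'_def by auto
  next
    case False
    then have m: "m < N" "u (y m) \<in> span (Fm \<union> y ` {..m})" "Suc m \<notin> L"
      using that y(4) by blast+
    moreover have "y' ` {..m} = y ` {..m}"
      using m(1) unfolding y'_def by (intro image_cong) auto
    ultimately show ?thesis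
      using n by (simp add: y'_def)
  qed
  show ?thesis
    unfolding chain_basis_mod_def y'_def[symmetric]
    using triangular_append[OF y(1,2) new] span_append_lessThan[OF y(2), of t n] inner ends
    unfolding y'_def by blast
qed

lemma funpow_in_stable:
  assumes "f ` A \<subseteq> A" "x \<in> A"
  shows "(f ^^ k) x \<in> A"
  using assms by (induction k) auto

lemma span_orbit_prefix_stable:
  assumes lin: "Vector_Spaces.linear scale scale u" and stable: "u ` A \<subseteq> span A"
    and returns: "(u ^^ n) x \<in> span (A \<union> (\<lambda>k. (u ^^ k) x) ` {..<n})"
  shows "u ` span (A \<union> (\<lambda>k. (u ^^ k) x) ` {..<n}) \<subseteq> span (A \<union> (\<lambda>k. (u ^^ k) x) ` {..<n})"
proof -
  let ?t = "\<lambda>k. (u ^^ k) x"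
  let ?Q = "span (A \<union> ?t ` {..<n})"
  have "u ` (A \<union> ?t ` {..<n}) \<subseteq> ?Q"
  proof
    fix z assume "z \<in> u ` (A \<union> ?t ` {..<n})"
    then consider a where "a \<in> A" "z = u a" | j where "j < n" "z = ?t (Suc j)"
      by auto
    then show "z \<in> ?Q"
    proof cases
      case 1
      then show ?thesis
        using stable span_mono[of A "A \<union> ?t ` {..<n}"] by blast
    next
      case 2
      show ?thesis
      proof (cases "Suc j = n")
        case True
        then show ?thesis using 2 returns by simp
      next
        case False
        then have "?t (Suc j) \<in> A \<union> ?t ` {..<n}"
          using 2 by (intro UnI2 rev_image_eqI[of "Suc j"]) auto
        then show ?thesis
          using 2 span_base by simp
      qed
    qed
  qed
  then show ?thesis
    using linear_image_in_span[OF lin] by blast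
qed

lemma orbit_in_span_if_returns:
  assumes lin: "Vector_Spaces.linear scale scale u" and stable: "u ` A \<subseteq> span A"
    and returns: "(u ^^ n) x \<in> span (A \<union> (\<lambda>k. (u ^^ k) x) ` {..<n})"
  shows "(u ^^ k) x \<in> span (A \<union> (\<lambda>k. (u ^^ k) x) ` {..<n})"
proof (induction k)
  case 0
  show ?case
  proof (cases n)
    case 0
    then show ?thesis using returns by simp
  next
    case (Suc m)
    then have "(u ^^ 0) x \<in> A \<union> (\<lambda>k. (u ^^ k) x) ` {..<n}"
      by (intro UnI2 rev_image_eqI[of 0]) auto
    then show ?thesis
      using span_base by simp
  qed
next
  case (Suc k)
  then show ?case
    using span_orbit_prefix_stable[OF assms] by auto
qed

lemma span_orbit_prefix_eq:
  assumes lin: "Vector_Spaces.linear scale scale u" and stable: "u ` Lb \<subseteq> span Lb"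
    and returns: "(u ^^ n) x \<in> span (Lb \<union> (\<lambda>k. (u ^^ k) x) ` {..<n})"
    and orbit: "range (\<lambda>k. (u ^^ k) x) \<subseteq> Mb" and gen: "Mb \<subseteq> span (Lb \<union> range (\<lambda>k. (u ^^ k) x))"
  shows "span (Lb \<union> (\<lambda>k. (u ^^ k) x) ` {..<n}) = span (Lb \<union> Mb)"
proof -
  let ?Q = "span (Lb \<union> (\<lambda>k. (u ^^ k) x) ` {..<n})"
  have "range (\<lambda>k. (u ^^ k) x) \<subseteq> ?Q"
    using orbit_in_span_if_returns[OF lin stable returns] by blast
  moreover have "Lb \<subseteq> ?Q"
    using span_superset[of "Lb \<union> (\<lambda>k. (u ^^ k) x) ` {..<n}"] by blast
  ultimately have "Mb \<subseteq> ?Q"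
    using gen span_minimal[of "Lb \<union> range (\<lambda>k. (u ^^ k) x)" ?Q] by blast
  then have "span (Lb \<union> Mb) \<subseteq> ?Q"
    using \<open>Lb \<subseteq> ?Q\<close> by (intro span_minimal) auto
  moreover have "?Q \<subseteq> span (Lb \<union> Mb)"
    using orbit by (intro span_mono) auto
  ultimately show ?thesis
    by blast
qed

lemma exists_in_span_of_predecessors:
  fixes t :: "nat \<Rightarrow> 'b"
  assumes "finite S0" "range t \<subseteq> span (Fm \<union> S0)" "Fm \<subseteq> Lb"
  shows "\<exists>n. t n \<in> span (Lb \<union> t ` {..<n})"
proof (rule ccontr)
  assume "\<nexists>n. t n \<in> span (Lb \<union> t ` {..<n})"
  then have "t k \<notin> span (Fm \<union> t ` {..<k})" for k
    using span_mono[of "Fm \<union> t ` {..<k}" "Lb \<union> t ` {..<k}"] assms(3) by blast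
  moreover have "t ` {..<Suc (card S0)} \<subseteq> span (Fm \<union> S0)"
    using assms(2) by blast
  ultimately have "Suc (card S0) \<le> card S0"
    using card_le_if_triangular[OF assms(1)] by blast
  then show False
    by simp
qed

lemma qdim_le_card:
  assumes "S0 \<subseteq> M" "finite S0" "M \<subseteq> span (L \<union> S0)"
  shows "qdim scale M L \<le> enat (card S0)"
proof -
  have "(LEAST n. \<exists>S. S \<subseteq> M \<and> finite S \<and> card S = n \<and> M \<subseteq> span (L \<union> S)) \<le> card S0"
    using assms by (intro Least_le) blast
  then show ?thesis
    unfolding qdim_def using assms by auto
qed

text \<open>Appending one stratum \<open>Mb\<close>, generated modulo \<open>Lb\<close> by the \<open>u\<close>-orbit of \<open>x\<close>, to a chain
  basis of \<open>Lb\<close>: the new chain is the orbit of \<open>x\<close> up to its first return into the span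
  of \<open>Lb\<close> and the earlier iterates, and \<open>qdim Mb Lb \<ge> 2\<close> makes it at least two long.\<close>
lemma chain_basis_mod_extend:
  assumes lin: "Vector_Spaces.linear scale scale u"
    and basis: "chain_basis_mod u Fm N y L Lb" and Lb_stable: "u ` Lb \<subseteq> Lb"
    and x: "x \<in> Mb" and Mb_gen: "Mb \<subseteq> span (Lb \<union> range (\<lambda>k. (u ^^ k) x))"
    and Mb_new: "\<not> Mb \<subseteq> Lb" and Mb_stable: "u ` Mb \<subseteq> Mb"
    and fin: "finite S0" "Mb \<subseteq> span (Fm \<union> S0)"
    and qdim: "qdim scale Mb Lb \<ge> 2"
  shows "\<exists>N' y' L'. N < N' \<and> chain_basis_mod u Fm N' y' L' (span (Lb \<union> Mb))"
proof -
  define t where "t k = (u ^^ k) x" for k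
  have "span (Fm \<union> y ` {..<N}) = Lb"
    using basis unfolding chain_basis_mod_def by blast
  then have Fm_Lb: "Fm \<subseteq> Lb" and span_Lb: "span Lb = Lb"
    using span_superset[of "Fm \<union> y ` {..<N}"] by auto
  have t_Mb: "range t \<subseteq> Mb"
    unfolding t_def using funpow_in_stable[OF Mb_stable x] by blast
  define n where "n = (LEAST n. t n \<in> span (Lb \<union> t ` {..<n}))"
  have "range t \<subseteq> span (Fm \<union> S0)"
    using t_Mb fin(2) by blast
  then have "\<exists>n. t n \<in> span (Lb \<union> t ` {..<n})"
    by (rule exists_in_span_of_predecessors[OF fin(1) _ Fm_Lb])
  then have returns: "t n \<in> span (Lb \<union> t ` {..<n})"
    unfolding n_def by (rule LeastI_ex)
  have new: "t k \<notin> span (Lb \<union> t ` {..<k})" if "k < n" for k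
    using not_less_Least[of k "\<lambda>n. t n \<in> span (Lb \<union> t ` {..<n})"] that unfolding n_def by blast
  have "u ` Lb \<subseteq> span Lb"
    unfolding span_Lb by (rule Lb_stable)
  then have Q: "span (Lb \<union> t ` {..<n}) = span (Lb \<union> Mb)"
    unfolding t_def using returns t_Mb Mb_gen unfolding t_def by (rule span_orbit_prefix_eq[OF lin])
  then have Mb_Q: "Mb \<subseteq> span (Lb \<union> t ` {..<n})"
    using span_superset[of "Lb \<union> Mb"] by blast
  have "n \<noteq> 0"
  proof
    assume "n = 0"
    then have "Mb \<subseteq> span Lb"
      using Mb_Q by simp
    then show False
      using Mb_new unfolding span_Lb by blast
  qed
  moreover have "n \<noteq> 1"
  proof
    assume "n = 1"
    then have "Mb \<subseteq> span (Lb \<union> {x})"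
      using Mb_Q by (simp add: t_def lessThan_Suc)
    then have "qdim scale Mb Lb \<le> enat (card {x})"
      using x by (intro qdim_le_card) auto
    then have "enat 2 \<le> enat 1"
      using qdim order_trans[of "enat 2" "qdim scale Mb Lb" "enat 1"] by (simp add: numeral_eq_enat)
    then show False
      by simp
  qed
  ultimately have "2 \<le> n"
    by simp
  then have "chain_basis_mod u Fm (N + n) (\<lambda>m. if m < N then y m else t (m - N))
      (insert (N + n - 1) L) (span (Lb \<union> Mb))"
    unfolding Q[symmetric] using basis new returns by (intro chain_basis_mod_append) (auto simp: t_def)
  then show ?thesis
    using \<open>2 \<le> n\<close> by (intro exI[of _ "N + n"]) auto
qed

lemma span_stable:
  assumes "Vector_Spaces.linear scale scale u" "u ` X \<subseteq> X"
  shows "u ` span X \<subseteq> span X"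
  using linear_image_in_span[OF assms(1)] assms(2) span_superset[of X] by blast

lemma stratification_quot_stratum:
  assumes strat: "stratification_quot scale u W Fm D M" and b: "b \<in> D"
  shows "u ` M b \<subseteq> M b" "M b \<subseteq> W" "\<not> M b \<subseteq> below scale Fm D M b"
    "\<exists>x\<in>M b. M b \<subseteq> span (below scale Fm D M b \<union> range (\<lambda>k. (u ^^ k) x))"
proof -
  note strata = strat[unfolded stratification_quot_def submod_def]
  show "u ` M b \<subseteq> M b" "M b \<subseteq> W"
    using conjunct1[OF strata] b by blast+
  have "\<forall>\<alpha>\<in>D. \<not> M \<alpha> \<subseteq> below scale Fm D M \<alpha>"
    using strata by (elim conjE)
  then show "\<not> M b \<subseteq> below scale Fm D M b"
    using b by (rule bspec)
  have "\<forall>\<alpha>\<in>D. \<exists>x\<in>M \<alpha>. M \<alpha> \<subseteq> span (below scale Fm D M \<alpha> \<union> range (\<lambda>k. (u ^^ k) x))"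
    using strata by (elim conjE)
  then show "\<exists>x\<in>M b. M b \<subseteq> span (below scale Fm D M b \<union> range (\<lambda>k. (u ^^ k) x))"
    using b by (rule bspec)
qed

lemma PA_plus_qdim:
  fixes D :: "'d::wellorder set"
  assumes "PA_plus scale Fm D M" "b \<in> D" "finite {\<beta>\<in>D. \<beta> < b}"
  shows "qdim scale (M b) (below scale Fm D M b) \<ge> 2"
proof -
  have "(\<forall>\<beta>\<in>D. b \<le> \<beta>) \<or> (\<exists>\<beta>\<in>D. \<beta> < b \<and> \<not> (\<exists>\<gamma>\<in>D. \<beta> < \<gamma> \<and> \<gamma> < b))"
    using assms(3) by (rule min_or_successor_if_finite_below)
  with bspec[OF assms(1)[unfolded PA_plus_def] assms(2)] show ?thesis
    by (rule mp)
qed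

lemma chain_basis_mod_initial_segment:
  fixes D :: "'d::wellorder set" and M :: "'d \<Rightarrow> 'b set"
  assumes lin: "Vector_Spaces.linear scale scale u" and Fm_stable: "u ` Fm \<subseteq> Fm"
    and fin: "finite S0" "W \<subseteq> span (Fm \<union> S0)"
    and strat: "stratification_quot scale u W Fm D M" and pa: "PA_plus scale Fm D M"
  shows "finite A \<Longrightarrow> A \<subseteq> D \<Longrightarrow> (\<forall>\<alpha>\<in>A. \<forall>\<beta>\<in>D. \<beta> < \<alpha> \<longrightarrow> \<beta> \<in> A) \<Longrightarrow>
    \<exists>N y L. chain_basis_mod u Fm N y L (span (Fm \<union> (\<Union>\<alpha>\<in>A. M \<alpha>))) \<and> card A \<le> N"
proof (induction A rule: finite_linorder_max_induct)
  case empty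
  have "chain_basis_mod u Fm 0 y {} (span Fm)" for y :: "nat \<Rightarrow> 'b"
    unfolding chain_basis_mod_def by simp
  then show ?case
    by auto
next
  case (insert b A)
  have b: "b \<in> D" and A: "A \<subseteq> D"
    using insert.prems by auto
  have below_b: "{\<beta>\<in>D. \<beta> < b} = A"
    using insert.hyps(2) insert.prems A by auto
  moreover have "\<forall>\<alpha>\<in>A. \<forall>\<beta>\<in>D. \<beta> < \<alpha> \<longrightarrow> \<beta> \<in> A"
    using below_b by (metis (mono_tags, lifting) insert.hyps(2) mem_Collect_eq order.strict_trans)
  ultimately obtain N y L where basis: "chain_basis_mod u Fm N y L (span (Fm \<union> (\<Union>\<alpha>\<in>A. M \<alpha>)))"
    and "card A \<le> N"
    using insert.IH A by blast
  define Lb where "Lb = span (Fm \<union> (\<Union>\<alpha>\<in>A. M \<alpha>))"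
  have below: "below scale Fm D M b = Lb"
    unfolding below_def Lb_def below_b ..
  note stratum = stratification_quot_stratum[OF strat]
  obtain x where x: "x \<in> M b" "M b \<subseteq> span (Lb \<union> range (\<lambda>k. (u ^^ k) x))"
    using stratum(4)[OF b] unfolding below by blast
  have "u ` (Fm \<union> (\<Union>\<alpha>\<in>A. M \<alpha>)) \<subseteq> Fm \<union> (\<Union>\<alpha>\<in>A. M \<alpha>)"
    using Fm_stable stratum(1) A by fastforce
  then have "u ` Lb \<subseteq> Lb"
    unfolding Lb_def by (rule span_stable[OF lin])
  moreover have "qdim scale (M b) Lb \<ge> 2"
    using PA_plus_qdim[OF pa b] below_b insert.hyps(1) unfolding below by simp
  ultimately obtain N' y' L' where "N < N'" "chain_basis_mod u Fm N' y' L' (span (Lb \<union> M b))"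
    using chain_basis_mod_extend[OF lin basis[folded Lb_def] _ x stratum(3,1)[OF b, unfolded below] fin(1)]
      stratum(2)[OF b] fin(2) by blast
  moreover have "span (Lb \<union> M b) = span (Fm \<union> (\<Union>\<alpha>\<in>insert b A. M \<alpha>))"
    unfolding Lb_def span_Un_span by (simp add: Un_ac)
  moreover have "card (insert b A) = Suc (card A)"
    using insert.hyps by auto
  ultimately show ?case
    using \<open>card A \<le> N\<close> by (metis Suc_leI order.strict_trans1)
qed

lemma chain_basis_mod_exists:
  fixes D :: "'d::wellorder set" and M :: "'d \<Rightarrow> 'b set"
  assumes lin: "Vector_Spaces.linear scale scale u" and Fm_stable: "u ` Fm \<subseteq> Fm"
    and fin: "finite S0" "W \<subseteq> span (Fm \<union> S0)"
    and strat: "stratification_quot scale u W Fm D M" and pa: "PA_plus scale Fm D M"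
  shows "\<exists>N y L. chain_basis_mod u Fm N y L W"
proof -
  have W: "W = span (Fm \<union> (\<Union>\<alpha>\<in>D. M \<alpha>))"
    using strat unfolding stratification_quot_def by (elim conjE)
  have "card A \<le> card S0"
    if A: "finite A" "A \<subseteq> D" "\<forall>\<alpha>\<in>A. \<forall>\<beta>\<in>D. \<beta> < \<alpha> \<longrightarrow> \<beta> \<in> A" for A
  proof -
    obtain N y L where basis: "chain_basis_mod u Fm N y L (span (Fm \<union> (\<Union>\<alpha>\<in>A. M \<alpha>)))"
      and "card A \<le> N"
      using chain_basis_mod_initial_segment[OF assms A] by blast
    have "span (Fm \<union> (\<Union>\<alpha>\<in>A. M \<alpha>)) \<subseteq> W"
      unfolding W using A(2) by (intro span_mono) blast
    then have "N \<le> card S0"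
      using chain_basis_mod_card_le[OF basis _ fin(1)] fin(2) by blast
    then show ?thesis
      using \<open>card A \<le> N\<close> by simp
  qed
  then have "finite D"
    by (rule finite_if_initial_segments_bounded)
  then have "\<exists>N y L. chain_basis_mod u Fm N y L (span (Fm \<union> (\<Union>\<alpha>\<in>D. M \<alpha>))) \<and> card D \<le> N"
    by (rule chain_basis_mod_initial_segment[OF assms]) auto
  then show ?thesis
    unfolding W[symmetric] by blast
qed

lemma chain_basis_mod_quotient:
  fixes D :: "'d::wellorder set" and M :: "'d \<Rightarrow> 'b set"
  assumes lin: "Vector_Spaces.linear scale scale u" and Fm: "submod scale u Fm"
    and fin: "\<exists>S. finite S \<and> W \<subseteq> span (Fm \<union> S)"
    and strat: "W \<noteq> Fm \<Longrightarrow> stratification_quot scale u W Fm D M \<and> PA_plus scale Fm D M"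
  shows "\<exists>N y L. chain_basis_mod u Fm N y L W"
proof (cases "W = Fm")
  case True
  have "span Fm = Fm"
    using Fm unfolding submod_def by simp
  then have "chain_basis_mod u Fm 0 y {} W" for y :: "nat \<Rightarrow> 'b"
    using True unfolding chain_basis_mod_def by simp
  then show ?thesis
    by blast
next
  case False
  obtain S0 where "finite S0" "W \<subseteq> span (Fm \<union> S0)"
    using fin by blast
  moreover have "u ` Fm \<subseteq> Fm"
    using Fm unfolding submod_def by blast
  ultimately show ?thesis
    using chain_basis_mod_exists[OF lin] strat[OF False] by blast
qed

end

lemma Least_greater_Suc: "Suc n \<in> S \<Longrightarrow> (LEAST m. m \<in> S \<and> n < m) = Suc n"
  by (rule Least_equality) auto

lemma Least_greater_Suc_Suc:
  assumes "Suc n \<notin> S" "Suc (Suc n) \<in> S"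
  shows "(LEAST m. m \<in> S \<and> n < m) = Suc (Suc n)"
proof (rule Least_equality)
  show "Suc (Suc n) \<in> S \<and> n < Suc (Suc n)"
    using assms(2) by simp
  fix m assume "m \<in> S \<and> n < m"
  then show "Suc (Suc n) \<le> m"
    using assms(1) by (cases "m = Suc n") auto
qed

locale chain_decomposition = vector_space scale
  for scale :: "'a::field \<Rightarrow> 'b::ab_group_add \<Rightarrow> 'b" (infixr \<open>*s\<close> 75) +
  fixes u :: "'b \<Rightarrow> 'b" and lam a :: 'a and Bf :: "'b set" and b0 :: 'b
    and N :: nat and y :: "nat \<Rightarrow> 'b" and L :: "nat set" and Hb :: "'b set"
  assumes lin: "Vector_Spaces.linear scale scale u"
    and b0: "b0 \<in> Bf"
    and orbits_inj: "inj_on (\<lambda>(b, k). (u ^^ k) b) (Bf \<times> UNIV)"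
    and y_inj: "inj_on y {..<N}"
    and orbits_y_disjoint: "(\<lambda>(b, k). (u ^^ k) b) ` (Bf \<times> UNIV) \<inter> y ` {..<N} = {}"
    and Hb_disjoint: "Hb \<inter> ((\<lambda>(b, k). (u ^^ k) b) ` (Bf \<times> UNIV) \<union> y ` {..<N}) = {}"
    and basis_independent: "independent ((\<lambda>(b, k). (u ^^ k) b) ` (Bf \<times> UNIV) \<union> y ` {..<N} \<union> Hb)"
    and basis_spans: "span ((\<lambda>(b, k). (u ^^ k) b) ` (Bf \<times> UNIV) \<union> y ` {..<N} \<union> Hb) = UNIV"
    and Hb_countable: "countable Hb"
    and Hb_eigen: "\<And>h. h \<in> Hb \<Longrightarrow> u h = lam *s h"
    and chain_step: "\<And>m. m < N \<Longrightarrow> m \<notin> L \<Longrightarrow> Suc m < N \<and> u (y m) = y (Suc m)"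
    and chain_end: "\<And>m. m \<in> L \<Longrightarrow>
      m < N \<and> u (y m) \<in> span ((\<lambda>(b, k). (u ^^ k) b) ` (Bf \<times> UNIV) \<union> y ` {..m}) \<and> Suc m \<notin> L"
begin

interpretation vp: vector_space_pair scale scale ..

definition orbits :: "'b set"
  where "orbits = (\<lambda>(b, k). (u ^^ k) b) ` (Bf \<times> UNIV)"

definition main_orbit :: "nat \<Rightarrow> 'b"
  where "main_orbit k = (u ^^ k) b0"

definition basis :: "'b set"
  where "basis = orbits \<union> y ` {..<N} \<union> Hb"

definition f_part :: "nat \<Rightarrow> 'b"
  where "f_part m = (SOME f. f \<in> span orbits \<and> u (y m) - f \<in> span (y ` {..m}))"

definition shift :: nat
  where "shift = (LEAST K. \<forall>m\<in>L. f_part m \<in> span (orbits - main_orbit ` {K..}))"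

definition slot :: "'b \<Rightarrow> nat"
  where "slot h = Suc (shift + 2 * to_nat_on Hb h)"

definition partner :: "'b \<Rightarrow> 'b"
  where "partner h = (a - 1) *s main_orbit (slot h) + main_orbit (Suc (slot h)) - h"

definition next_y :: "nat \<Rightarrow> 'b"
  where "next_y m = (if Suc m < N then y (Suc m) else main_orbit 0)"

definition v_basis :: "'b \<Rightarrow> 'b"
  where "v_basis e =
    (if e \<in> y ` {..<N} then
       (let m = the_inv_into {..<N} y e in if m \<in> L then f_part m + a *s e - next_y m else 0)
     else if e \<in> Hb then - partner e
     else if e \<in> main_orbit ` slot ` Hb then partner (the_inv_into Hb (main_orbit \<circ> slot) e)
     else 0)"

definition v :: "'b \<Rightarrow> 'b"
  where "v = vp.construct basis v_basis"

lemma basis_facts: "independent basis" "span basis = UNIV"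
  using basis_independent basis_spans unfolding basis_def orbits_def by simp_all

lemma orbit_in_orbits: "b \<in> Bf \<Longrightarrow> (u ^^ k) b \<in> orbits"
  unfolding orbits_def by (rule image_eqI[of _ _ "(b, k)"]) auto

lemma main_orbit_in_orbits: "main_orbit k \<in> orbits"
  unfolding main_orbit_def using b0 by (rule orbit_in_orbits)

lemma orbit_eq_iff:
  assumes "b \<in> Bf" "b' \<in> Bf"
  shows "(u ^^ k) b = (u ^^ k') b' \<longleftrightarrow> b = b' \<and> k = k'"
  using inj_onD[OF orbits_inj, of "(b, k)" "(b', k')"] assms by auto

lemma main_orbit_inj: "inj main_orbit"
  unfolding main_orbit_def inj_def using orbit_eq_iff[OF b0 b0] by blast

lemma orbits_not_y: "e \<in> orbits \<Longrightarrow> e \<notin> y ` {..<N}"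
  using orbits_y_disjoint unfolding orbits_def by blast

lemma Hb_not_orbits_y: "h \<in> Hb \<Longrightarrow> h \<notin> orbits \<and> h \<notin> y ` {..<N}"
  using Hb_disjoint unfolding orbits_def by blast

lemma f_part:
  assumes "m \<in> L"
  shows "f_part m \<in> span orbits" "u (y m) - f_part m \<in> span (y ` {..m})"
proof -
  have "u (y m) \<in> span (orbits \<union> y ` {..m})"
    using chain_end[OF assms] unfolding orbits_def by blast
  then obtain f z where "u (y m) = f + z" "f \<in> span orbits" "z \<in> span (y ` {..m})"
    unfolding span_Un by blast
  then have "\<exists>f. f \<in> span orbits \<and> u (y m) - f \<in> span (y ` {..m})"
    by (intro exI[of _ f]) simp
  then show "f_part m \<in> span orbits" "u (y m) - f_part m \<in> span (y ` {..m})"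
    unfolding f_part_def by (metis (mono_tags, lifting) someI_ex)+
qed

lemma f_part_avoids_shift:
  assumes "m \<in> L"
  shows "f_part m \<in> span (orbits - main_orbit ` {shift..})"
proof -
  have "\<exists>S. finite S \<and> S \<subseteq> orbits \<and> f_part m \<in> span S" if "m \<in> L" for m
    by (rule in_span_finite_subset[OF f_part(1)[OF that]]) blast
  then obtain S where S: "\<And>m. m \<in> L \<Longrightarrow> finite (S m) \<and> S m \<subseteq> orbits \<and> f_part m \<in> span (S m)"
    by metis
  have "L \<subseteq> {..<N}"
    using chain_end by blast
  then have "finite (\<Union>m\<in>L. S m)"
    using S finite_subset by blast
  then have "finite (main_orbit -` (\<Union>m\<in>L. S m))"
    using main_orbit_inj by (simp add: finite_vimageI)
  then obtain K where K: "main_orbit -` (\<Union>m\<in>L. S m) \<subseteq> {..<K}"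
    using finite_nat_bounded by blast
  have "S m \<subseteq> orbits - main_orbit ` {K..}" if "m \<in> L" for m
    using S[OF that] K that by fastforce
  then have "\<forall>m\<in>L. f_part m \<in> span (orbits - main_orbit ` {K..})"
    using S span_mono by blast
  then show ?thesis
    unfolding shift_def using LeastI_ex[of "\<lambda>K. \<forall>m\<in>L. f_part m \<in> span (orbits - main_orbit ` {K..})"]
      assms by blast
qed

lemma slot_inj: "inj_on slot Hb"
  using inj_on_to_nat_on[OF Hb_countable] unfolding slot_def inj_on_def by simp

lemma slot_ge_shift: "shift \<le> slot h"
  unfolding slot_def by simp

lemma slot_nonzero: "slot h \<noteq> 0"
  unfolding slot_def by simp

lemma Suc_slot_not_slot: "Suc (slot h) \<noteq> slot h'"
  unfolding slot_def by presburger

lemma v_linear: "Vector_Spaces.linear scale scale v"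
  unfolding v_def using basis_facts(1) by (rule vp.linear_construct)

lemma v_on_basis: "e \<in> basis \<Longrightarrow> v e = v_basis e"
  unfolding v_def using basis_facts(1) by (rule vp.construct_basis)

lemma v_y:
  assumes "m < N"
  shows "v (y m) = (if m \<in> L then f_part m + a *s y m - next_y m else 0)"
proof -
  have "y m \<in> y ` {..<N}" "the_inv_into {..<N} y (y m) = m"
    using assms the_inv_into_f_f[OF y_inj] by auto
  then show ?thesis
    using v_on_basis[of "y m"] unfolding basis_def v_basis_def by simp
qed

lemma v_Hb: "h \<in> Hb \<Longrightarrow> v h = - partner h"
  using v_on_basis[of h] Hb_not_orbits_y[of h] unfolding basis_def v_basis_def by simp

lemma v_slot:
  assumes "h \<in> Hb"
  shows "v (main_orbit (slot h)) = partner h"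
proof -
  have "inj_on (main_orbit \<circ> slot) Hb"
    using slot_inj main_orbit_inj by (simp add: comp_inj_on inj_on_subset)
  then have "the_inv_into Hb (main_orbit \<circ> slot) (main_orbit (slot h)) = h"
    using the_inv_into_f_f[of "main_orbit \<circ> slot" Hb h] assms by simp
  moreover have "main_orbit (slot h) \<notin> y ` {..<N} \<union> Hb"
    using main_orbit_in_orbits orbits_not_y Hb_not_orbits_y by blast
  ultimately show ?thesis
    using v_on_basis[of "main_orbit (slot h)"] main_orbit_in_orbits assms
    unfolding basis_def v_basis_def by auto
qed

lemma v_orbits:
  assumes "e \<in> orbits" "e \<notin> main_orbit ` slot ` Hb"
  shows "v e = 0"
  using v_on_basis[of e] assms orbits_not_y Hb_not_orbits_y unfolding basis_def v_basis_def by auto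

lemma v_vanishes_on_span:
  assumes "\<And>e. e \<in> S \<Longrightarrow> v e = 0" "x \<in> span S"
  shows "v x = 0"
proof -
  interpret v: Vector_Spaces.linear scale scale v
    by (rule v_linear)
  show ?thesis
    using v.eq_0_on_span assms by blast
qed

lemma v_f_part:
  assumes "m \<in> L"
  shows "v (f_part m) = 0"
proof (rule v_vanishes_on_span)
  show "f_part m \<in> span (orbits - main_orbit ` {shift..})"
    using assms by (rule f_part_avoids_shift)
  fix e assume e: "e \<in> orbits - main_orbit ` {shift..}"
  have "main_orbit ` slot ` Hb \<subseteq> main_orbit ` {shift..}"
    using slot_ge_shift by (intro image_mono) auto
  then have "e \<notin> main_orbit ` slot ` Hb"
    using e by blast
  then show "v e = 0"
    using e v_orbits by simp
qed

lemma main_orbit_not_slot: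
  assumes "k \<notin> slot ` Hb"
  shows "main_orbit k \<notin> main_orbit ` slot ` Hb"
  using assms main_orbit_inj by (auto dest: injD)

lemma v_next_y:
  assumes "m \<in> L"
  shows "v (next_y m) = 0"
proof (cases "Suc m < N")
  case True
  then show ?thesis
    using chain_end[OF assms] v_y by (simp add: next_y_def)
next
  case False
  have "0 \<notin> slot ` Hb"
    using slot_nonzero by (metis imageE)
  then have "main_orbit 0 \<notin> main_orbit ` slot ` Hb"
    by (rule main_orbit_not_slot)
  with main_orbit_in_orbits have "v (main_orbit 0) = 0"
    by (rule v_orbits)
  then show ?thesis
    using False by (simp add: next_y_def)
qed

lemma v_partner:
  assumes "h \<in> Hb"
  shows "v (partner h) = a *s partner h"
proof -
  interpret v: Vector_Spaces.linear scale scale v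
    by (rule v_linear)
  have "Suc (slot h) \<notin> slot ` Hb"
    using Suc_slot_not_slot by blast
  then have "main_orbit (Suc (slot h)) \<notin> main_orbit ` slot ` Hb"
    by (rule main_orbit_not_slot)
  with main_orbit_in_orbits have "v (main_orbit (Suc (slot h))) = 0"
    by (rule v_orbits)
  have "v (partner h) = (a - 1) *s v (main_orbit (slot h)) + v (main_orbit (Suc (slot h))) - v h"
    unfolding partner_def by (simp only: v.add v.diff v.scale)
  also have "\<dots> = (a - 1) *s partner h + partner h"
    unfolding v_slot[OF assms] v_Hb[OF assms] \<open>v (main_orbit (Suc (slot h))) = 0\<close> by simp
  also have "\<dots> = a *s partner h"
    by (simp add: scale_left_diff_distrib)
  finally show ?thesis .
qed

lemma v_idem: "v (v x) = a *s v x"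
proof -
  interpret v: Vector_Spaces.linear scale scale v
    by (rule v_linear)
  have on_basis: "v (v e) = a *s v e" if e: "e \<in> basis" for e
  proof (cases "e \<in> main_orbit ` slot ` Hb")
    case True
    then obtain h where "h \<in> Hb" "e = main_orbit (slot h)"
      by blast
    then show ?thesis
      by (simp add: v_slot v_partner)
  next
    case False
    then consider (y) m where "m < N" "e = y m" | (Hb) "e \<in> Hb" | (orbit) "e \<in> orbits"
      using e unfolding basis_def by blast
    then show ?thesis
    proof cases
      case y
      then show ?thesis
        using v_f_part v_next_y by (simp add: v_y v.add v.diff v.scale)
    next
      case Hb
      then show ?thesis
        by (simp add: v_Hb v.neg v_partner)
    next
      case orbit
      then show ?thesis
        using False by (simp add: v_orbits v.zero)
    qed
  qed
  have "Vector_Spaces.linear scale scale (\<lambda>x. v (v x))"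
    using Vector_Spaces.linear_compose[OF v_linear v_linear] by (simp add: comp_def)
  moreover have "Vector_Spaces.linear scale scale (\<lambda>x. a *s v x)"
    by (rule vp.linear_compose_scale_right[OF v_linear])
  moreover have "x \<in> span basis"
    using basis_facts(2) by simp
  ultimately show ?thesis
    using on_basis by (rule vp.linear_eq_on)
qed

lemma step_y:
  assumes "m < N" "m \<notin> L"
  shows "u (y m) - v (y m) = y (Suc m)"
  using assms chain_step v_y by simp

lemma step_y_end:
  assumes "m \<in> L"
  shows "u (y m) - v (y m) - next_y m \<in> span (y ` {..m})"
proof -
  have "m < N"
    using chain_end[OF assms] by blast
  then have "u (y m) - v (y m) - next_y m = (u (y m) - f_part m) - a *s y m"
    using assms v_y by (simp add: algebra_simps)
  also have "\<dots> \<in> span (y ` {..m})"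
    by (rule span_diff[OF f_part(2)[OF assms] span_scale[OF span_base]]) auto
  finally show ?thesis .
qed

lemma step_orbit:
  assumes "b \<in> Bf" "b \<noteq> b0 \<or> k \<notin> slot ` Hb"
  shows "u ((u ^^ k) b) - v ((u ^^ k) b) = (u ^^ Suc k) b"
proof -
  have "(u ^^ k) b \<notin> main_orbit ` slot ` Hb"
    using assms orbit_eq_iff[OF assms(1) b0] unfolding main_orbit_def by auto
  then show ?thesis
    using v_orbits orbit_in_orbits[OF assms(1)] by simp
qed

lemma step_slot:
  assumes "h \<in> Hb"
  shows "u (main_orbit (slot h)) - v (main_orbit (slot h)) - h = (1 - a) *s main_orbit (slot h)"
  using v_slot[OF assms]
  by (simp add: partner_def main_orbit_def algebra_simps scale_left_diff_distrib)

lemma step_Hb: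
  assumes "h \<in> Hb"
  shows "u h - v h - main_orbit (Suc (slot h)) = (lam - 1) *s h + (a - 1) *s main_orbit (slot h)"
  using v_Hb[OF assms] Hb_eigen[OF assms]
  by (simp add: partner_def algebra_simps scale_left_diff_distrib)

text \<open>The chain through \<open>y 0, \<dots>, y (N - 1)\<close> continues with the orbit of \<open>b0\<close> at the even
  positions \<open>N + 2 k\<close>; each \<open>h \<in> Hb\<close> is inserted at the odd position right after
  \<open>main_orbit (slot h)\<close>.\<close>
definition positions :: "nat set"
  where "positions = {..<N} \<union> range (\<lambda>k. N + 2 * k) \<union> (\<lambda>h. Suc (N + 2 * slot h)) ` Hb"

definition main_chain :: "nat \<Rightarrow> 'b"
  where "main_chain n =
    (if n < N then y n
     else if even (n - N) then main_orbit ((n - N) div 2)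
     else the_inv_into Hb (\<lambda>h. Suc (N + 2 * slot h)) n)"

lemma main_chain_y: "n < N \<Longrightarrow> main_chain n = y n"
  unfolding main_chain_def by simp

lemma main_chain_orbit: "main_chain (N + 2 * k) = main_orbit k"
  unfolding main_chain_def by simp

lemma main_chain_Hb:
  assumes "h \<in> Hb"
  shows "main_chain (Suc (N + 2 * slot h)) = h"
proof -
  have "inj_on (\<lambda>h. Suc (N + 2 * slot h)) Hb"
    using slot_inj by (simp add: inj_on_def)
  from the_inv_into_f_f[OF this assms] show ?thesis
    unfolding main_chain_def by simp
qed

lemma positions_cases:
  assumes "n \<in> positions"
  obtains "n < N" | k where "n = N + 2 * k" | h where "h \<in> Hb" "n = Suc (N + 2 * slot h)"
  using assms unfolding positions_def by blast

lemma main_orbit_neq_y: "m < N \<Longrightarrow> main_orbit k \<noteq> y m"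
  using orbits_not_y[OF main_orbit_in_orbits] by blast

lemma Hb_neq_y: "h \<in> Hb \<Longrightarrow> m < N \<Longrightarrow> h \<noteq> y m"
  using Hb_not_orbits_y by blast

lemma Hb_neq_main_orbit: "h \<in> Hb \<Longrightarrow> h \<noteq> main_orbit k"
  using Hb_not_orbits_y main_orbit_in_orbits by blast

lemma main_chain_inj: "inj_on main_chain positions"
proof (rule inj_onI)
  fix n n' assume "n \<in> positions" "n' \<in> positions" "main_chain n = main_chain n'"
  then show "n = n'"
    using y_inj main_orbit_inj slot_inj main_orbit_neq_y Hb_neq_y Hb_neq_main_orbit
    by (elim positions_cases)
      (auto simp: main_chain_y main_chain_orbit main_chain_Hb inj_on_def inj_def, metis+)
qed

lemma main_chain_image: "main_chain ` positions = y ` {..<N} \<union> range main_orbit \<union> Hb"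
proof -
  have "main_chain ` {..<N} = y ` {..<N}"
    by (simp add: main_chain_y)
  moreover have "main_chain ` range (\<lambda>k. N + 2 * k) = range main_orbit"
    by (simp add: image_image main_chain_orbit)
  moreover have "main_chain ` (\<lambda>h. Suc (N + 2 * slot h)) ` Hb = Hb"
    by (simp add: image_image main_chain_Hb)
  ultimately show ?thesis
    unfolding positions_def image_Un by simp
qed

lemma positions_intros:
  "m < N \<Longrightarrow> m \<in> positions" "N + 2 * k \<in> positions"
  "h \<in> Hb \<Longrightarrow> Suc (N + 2 * slot h) \<in> positions"
  unfolding positions_def by auto

lemma main_chain_orbit_Suc: "main_chain (Suc (Suc (N + 2 * k))) = main_orbit (Suc k)"
  using main_chain_orbit[of "Suc k"] by simp

lemma in_span_main_chain_upto:
  "j \<in> positions \<Longrightarrow> j \<le> n \<Longrightarrow> main_chain j \<in> span (main_chain ` {m \<in> positions. m \<le> n})"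
  by (rule span_base) blast

lemma main_chain_triangular_y:
  assumes "n < N"
  shows "u (main_chain n) - v (main_chain n) - main_chain (LEAST m. m \<in> positions \<and> n < m)
    \<in> span (main_chain ` {m \<in> positions. m \<le> n})"
proof (cases "n \<in> L")
  case False
  then have "Suc n < N"
    using chain_step[OF assms] by blast
  then show ?thesis
    using assms False step_y positions_intros(1)
    by (simp add: Least_greater_Suc main_chain_y span_zero)
next
  case True
  have "Suc n \<in> positions \<and> main_chain (Suc n) = next_y n"
  proof (cases "Suc n < N")
    case True
    then show ?thesis
      by (simp add: positions_intros(1) main_chain_y next_y_def)
  next
    case False
    then have "Suc n = N + 2 * 0"
      using assms by simp
    then show ?thesis
      using False positions_intros(2)[of 0] main_chain_orbit[of 0] by (simp add: next_y_def)
  qed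
  moreover have "span (y ` {..n}) \<subseteq> span (main_chain ` {m \<in> positions. m \<le> n})"
    using assms positions_intros(1) by (intro span_mono) (auto simp: main_chain_y image_iff)
  ultimately show ?thesis
    using step_y_end[OF True] assms by (auto simp: Least_greater_Suc main_chain_y)
qed

lemma main_chain_triangular_orbit:
  "u (main_chain (N + 2 * k)) - v (main_chain (N + 2 * k)) - main_chain (LEAST m. m \<in> positions \<and> N + 2 * k < m)
    \<in> span (main_chain ` {m \<in> positions. m \<le> N + 2 * k})"
proof (cases "k \<in> slot ` Hb")
  case True
  then obtain h where h: "h \<in> Hb" "k = slot h"
    by blast
  then have "u (main_chain (N + 2 * k)) - v (main_chain (N + 2 * k)) - main_chain (Suc (N + 2 * k))
      = (1 - a) *s main_chain (N + 2 * k)"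
    using step_slot by (simp add: main_chain_orbit main_chain_Hb)
  then show ?thesis
    using h positions_intros(2,3) in_span_main_chain_upto[of "N + 2 * k"]
    by (simp add: Least_greater_Suc span_scale)
next
  case False
  have "Suc (N + 2 * k) \<notin> positions"
    using False unfolding positions_def by auto presburger
  moreover have "Suc (Suc (N + 2 * k)) \<in> positions"
    using positions_intros(2)[of "Suc k"] by simp
  ultimately have "(LEAST m. m \<in> positions \<and> N + 2 * k < m) = N + 2 * Suc k"
    by (simp add: Least_greater_Suc_Suc)
  moreover have "u (main_chain (N + 2 * k)) - v (main_chain (N + 2 * k)) = main_chain (N + 2 * Suc k)"
    using step_orbit[OF b0] False by (simp add: main_chain_orbit main_chain_orbit_Suc main_orbit_def)
  ultimately show ?thesis
    by (simp add: span_zero)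
qed

lemma main_chain_triangular_Hb:
  assumes "h \<in> Hb"
  shows "u (main_chain (Suc (N + 2 * slot h))) - v (main_chain (Suc (N + 2 * slot h)))
      - main_chain (LEAST m. m \<in> positions \<and> Suc (N + 2 * slot h) < m)
    \<in> span (main_chain ` {m \<in> positions. m \<le> Suc (N + 2 * slot h)})"
proof -
  have "Suc (Suc (N + 2 * slot h)) = N + 2 * Suc (slot h)"
    by simp
  then have "(LEAST m. m \<in> positions \<and> Suc (N + 2 * slot h) < m) = N + 2 * Suc (slot h)"
    using positions_intros(2)[of "Suc (slot h)"] Least_greater_Suc by metis
  then show ?thesis
    using step_Hb[OF assms] positions_intros(2) positions_intros(3)[OF assms]
      in_span_main_chain_upto[of "N + 2 * slot h" "Suc (N + 2 * slot h)"]
      in_span_main_chain_upto[of "Suc (N + 2 * slot h)" "Suc (N + 2 * slot h)"]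
    by (simp add: main_chain_Hb[OF assms] main_chain_orbit main_chain_orbit_Suc span_add span_scale)
qed

lemma main_chain_triangular:
  assumes "n \<in> positions"
  shows "u (main_chain n) - v (main_chain n) - main_chain (LEAST m. m \<in> positions \<and> n < m)
    \<in> span (main_chain ` {m \<in> positions. m \<le> n})"
  using assms
proof (cases rule: positions_cases)
  case 1
  then show ?thesis
    by (rule main_chain_triangular_y)
next
  case (2 k)
  then show ?thesis
    using main_chain_triangular_orbit by simp
next
  case (3 h)
  then show ?thesis
    using main_chain_triangular_Hb by simp
qed

definition chain :: "'b \<Rightarrow> nat \<Rightarrow> 'b"
  where "chain b n = (if b = b0 then main_chain n else (u ^^ n) b)"

definition chain_positions :: "'b \<Rightarrow> nat set"
  where "chain_positions b = (if b = b0 then positions else UNIV)"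

lemma other_orbit_not_main_chain:
  assumes "b \<in> Bf" "b \<noteq> b0" "n' \<in> positions"
  shows "(u ^^ n) b \<noteq> main_chain n'"
  using assms(3)
proof (cases rule: positions_cases)
  case 1
  then show ?thesis
    using orbits_not_y[OF orbit_in_orbits[OF assms(1)]] by (auto simp: main_chain_y)
next
  case (2 k)
  then show ?thesis
    using orbit_eq_iff[OF assms(1) b0] assms(2) by (simp add: main_chain_orbit main_orbit_def)
next
  case (3 h)
  then show ?thesis
    using Hb_not_orbits_y orbit_in_orbits[OF assms(1)] by (auto simp: main_chain_Hb)
qed

lemma chain_inj: "inj_on (\<lambda>(b, n). chain b n) (SIGMA b:Bf. chain_positions b)"
proof (rule inj_onI, clarify)
  fix b n b' n'
  assume "b \<in> Bf" "n \<in> chain_positions b" "b' \<in> Bf" "n' \<in> chain_positions b'" "chain b n = chain b' n'"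
  then show "b = b' \<and> n = n'"
    using main_chain_inj orbit_eq_iff other_orbit_not_main_chain
    unfolding chain_def chain_positions_def inj_on_def by (auto split: if_splits) metis+
qed

lemma chain_image: "(\<lambda>(b, n). chain b n) ` (SIGMA b:Bf. chain_positions b) = basis"
proof -
  let ?chain = "\<lambda>(b, n). chain b n"
  let ?others = "(\<lambda>(b, k). (u ^^ k) b) ` ((Bf - {b0}) \<times> UNIV)"
  have "(SIGMA b:Bf. chain_positions b) = {b0} \<times> positions \<union> (Bf - {b0}) \<times> UNIV"
    using b0 unfolding chain_positions_def by auto
  then have "?chain ` (SIGMA b:Bf. chain_positions b) = ?chain ` ({b0} \<times> positions) \<union> ?chain ` ((Bf - {b0}) \<times> UNIV)"
    by (simp only: image_Un)
  also have "?chain ` ({b0} \<times> positions) = main_chain ` positions"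
    by (force simp: chain_def)
  also have "?chain ` ((Bf - {b0}) \<times> UNIV) = ?others"
  proof (rule image_cong)
    fix p :: "'b \<times> nat"
    assume "p \<in> (Bf - {b0}) \<times> UNIV"
    then show "?chain p = (\<lambda>(b, k). (u ^^ k) b) p"
      by (cases p) (simp add: chain_def)
  qed simp
  also have "main_chain ` positions \<union> ?others = basis"
  proof -
    have "orbits = range main_orbit \<union> ?others"
      unfolding orbits_def main_orbit_def using b0 by auto
    then show ?thesis
      unfolding basis_def main_chain_image by (simp add: Un_ac)
  qed
  finally show ?thesis .
qed

lemma positions_infinite: "infinite positions"
proof -
  have "inj (\<lambda>k. N + 2 * k)"
    by (simp add: inj_def)
  then have "infinite (range (\<lambda>k. N + 2 * k))"
    by (rule range_inj_infinite)
  then show ?thesis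
    unfolding positions_def using infinite_super by blast
qed

theorem elementary_u_minus_v: "elementary scale (\<lambda>x. u x - v x)"
proof (rule elementary_if_triangular_basis_sparse)
  show "Vector_Spaces.linear scale scale (\<lambda>x. u x - v x)"
    using vp.linear_compose_sub[OF lin v_linear] .
  show "infinite (chain_positions b)" for b
    using positions_infinite by (simp add: chain_positions_def)
  show "inj_on (\<lambda>(b, n). chain b n) (SIGMA b:Bf. chain_positions b)"
    by (rule chain_inj)
  show "independent ((\<lambda>(b, n). chain b n) ` (SIGMA b:Bf. chain_positions b))"
    "span ((\<lambda>(b, n). chain b n) ` (SIGMA b:Bf. chain_positions b)) = UNIV"
    unfolding chain_image by (rule basis_facts)+
  fix b n assume "b \<in> Bf" "n \<in> chain_positions b"
  then show "u (chain b n) - v (chain b n) - chain b (LEAST m. m \<in> chain_positions b \<and> n < m)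
      \<in> span (chain b ` {m \<in> chain_positions b. m \<le> n})"
    using main_chain_triangular step_orbit[OF \<open>b \<in> Bf\<close>] Least_greater_Suc[of n UNIV]
    by (auto simp: chain_def chain_positions_def span_zero)
qed

end

context vector_space
begin

lemma chain_decomposition_if_splitting:
  fixes u :: "'b \<Rightarrow> 'b" and Bf :: "'b set"
  defines "Fbasis \<equiv> (\<lambda>(b, k). (u ^^ k) b) ` (Bf \<times> UNIV)"
  assumes lin: "Vector_Spaces.linear scale scale u"
    and Bf: "inj_on (\<lambda>(b, k). (u ^^ k) b) (Bf \<times> UNIV)" "independent Fbasis" "span Fbasis = Fm" "b0 \<in> Bf"
    and basis: "chain_basis_mod u Fm N y L W"
    and WH: "W \<inter> H = {0}" "span (W \<union> H) = UNIV"
    and Hb: "independent Hb" "span Hb = H" "countable Hb"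
    and eigen: "\<forall>x\<in>H. u x = lam *s x"
  shows "chain_decomposition scale u lam Bf b0 N y L Hb"
proof -
  have span_Fbasis: "span (Fbasis \<union> X) = span (Fm \<union> X)" for X
    using span_Un_span[of Fbasis X] Bf(3) by simp
  have y: "\<forall>m<N. y m \<notin> span (Fm \<union> y ` {..<m})" "span (Fm \<union> y ` {..<N}) = W"
    "\<And>m. m < N \<Longrightarrow> m \<notin> L \<Longrightarrow> Suc m < N \<and> u (y m) = y (Suc m)"
    "\<And>m. m \<in> L \<Longrightarrow> m < N \<and> u (y m) \<in> span (Fm \<union> y ` {..m}) \<and> Suc m \<notin> L"
    using basis unfolding chain_basis_mod_def by blast+
  have OY: "independent (Fbasis \<union> y ` {..<N})" "inj_on y {..<N}" "Fbasis \<inter> y ` {..<N} = {}"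
    using independent_Un_triangular[OF Bf(2), of N y] y(1) span_Fbasis by auto
  have span_OY: "span (Fbasis \<union> y ` {..<N}) = W"
    using span_Fbasis y(2) by simp
  have independent: "independent (Fbasis \<union> y ` {..<N} \<union> Hb)"
    using independent_Un[OF OY(1) Hb(1)] span_OY Hb(2) WH(1) by simp
  have disjoint: "Hb \<inter> (Fbasis \<union> y ` {..<N}) = {}"
  proof -
    have "z \<in> W \<inter> H" if "z \<in> Hb" "z \<in> Fbasis \<union> y ` {..<N}" for z
      using that span_base[of z Hb] span_base[of z "Fbasis \<union> y ` {..<N}"] Hb(2) span_OY by simp
    moreover have "0 \<notin> Hb"
      using Hb(1) dependent_zero by blast
    ultimately show ?thesis
      using WH(1) by fastforce
  qed
  have spans: "span (Fbasis \<union> y ` {..<N} \<union> Hb) = UNIV"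
  proof -
    have "W \<union> H \<subseteq> span (Fbasis \<union> y ` {..<N} \<union> Hb)"
      using span_OY Hb(2) span_mono[of "Fbasis \<union> y ` {..<N}" "Fbasis \<union> y ` {..<N} \<union> Hb"]
        span_mono[of Hb "Fbasis \<union> y ` {..<N} \<union> Hb"] by blast
    then show ?thesis
      using WH(2) span_minimal[of "W \<union> H"] by (metis subspace_span top.extremum_uniqueI)
  qed
  have Hb_eigen: "u h = lam *s h" if "h \<in> Hb" for h
    using eigen that Hb(2) span_superset[of Hb] by blast
  have chain_end: "m < N \<and> u (y m) \<in> span (Fbasis \<union> y ` {..m}) \<and> Suc m \<notin> L" if "m \<in> L" for m
    using y(4)[OF that] span_Fbasis by simp
  show ?thesis
    using chain_decomposition_axioms.intro[OF lin Bf(4) Bf(1) OY(2) OY(3)[unfolded Fbasis_def]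
        disjoint[unfolded Fbasis_def] independent[unfolded Fbasis_def] spans[unfolded Fbasis_def]
        Hb(3) Hb_eigen y(3) chain_end[unfolded Fbasis_def]]
    by (intro chain_decomposition.intro vector_space_axioms)
qed

end

theorem proposition6:
  fixes scale :: "'f::field \<Rightarrow> 'v::ab_group_add \<Rightarrow> 'v"
    and u :: "'v \<Rightarrow> 'v" and lam a :: 'f
    and W H Fm :: "'v set"
    and D :: "'d::wellorder set" and M :: "'d \<Rightarrow> 'v set"
  assumes vs: "vector_space scale"
    and dim: "\<exists>B. module.independent scale B \<and> module.span scale B = UNIV \<and> countable B \<and> infinite B"
    and lin: "Vector_Spaces.linear scale scale u"
    and W: "submod scale u W" and H: "submod scale u H"
    and WH_inter: "W \<inter> H = {0}"
    and WH_sum: "module.span scale (W \<union> H) = UNIV"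
    and F_free: "free_submod scale u Fm" and F_nz: "Fm \<noteq> {0}" and F_sub: "Fm \<subseteq> W"
    and quot_fin: "\<exists>S. finite S \<and> W \<subseteq> module.span scale (Fm \<union> S)"
    and strat: "W \<noteq> Fm \<Longrightarrow> stratification_quot scale u W Fm D M \<and> PA_plus scale Fm D M"
    and H_eig: "\<forall>x\<in>H. u x = scale lam x"
  shows "\<exists>v. Vector_Spaces.linear scale scale v \<and> (\<forall>x. v (v x) = scale a (v x)) \<and>
             elementary scale (\<lambda>x. u x - v x)"
proof -
  interpret vector_space scale
    by (rule vs)
  obtain Bf where Bf: "inj_on (\<lambda>(b, k). (u ^^ k) b) (Bf \<times> UNIV)"
    "independent ((\<lambda>(b, k). (u ^^ k) b) ` (Bf \<times> UNIV))" "span ((\<lambda>(b, k). (u ^^ k) b) ` (Bf \<times> UNIV)) = Fm"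
    using F_free unfolding free_submod_def by blast
  then obtain b0 where "b0 \<in> Bf"
    using F_nz by fastforce
  obtain N y L where "chain_basis_mod u Fm N y L W"
    using chain_basis_mod_quotient[OF lin _ quot_fin strat] F_free unfolding free_submod_def by blast
  obtain Hb where Hb: "independent Hb" "span Hb = H"
    using basis_exists[of H] H span_subspace unfolding submod_def by metis
  moreover have "countable Hb"
    using dim countable_independent Hb(1) by blast
  ultimately interpret chain_decomposition scale u lam a Bf b0 N y L Hb
    using chain_decomposition_if_splitting[OF lin Bf \<open>b0 \<in> Bf\<close> \<open>chain_basis_mod u Fm N y L W\<close>
        WH_inter WH_sum] H_eig by blast
  show ?thesis
    using v_linear v_idem elementary_u_minus_v by blast
qed

end
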